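(* Let $V_1$ and $V_2$ be near vector spaces over the same commutative $F$, each of finite block type. Then $BT(V_1)=BT(V_2)$ if and only if $\bar F\cap\mathrm{Aut}(V_1)=\bar F\cap\mathrm{Aut}(V_2)$.
   Context: An F-group is a pair $(V,F)$ where $(V,+)$ is a group and $F$ is a set of endomorphisms of $V$ such that: the maps $0,1,-1$ lie in $F$; $F\setminus\{0\}$ is a subgroup of $\mathrm{Aut}(V,+)$ under composition; and if $\alpha x=\beta x$ with $\alpha,\beta\in F$, $x\in V$ then $\alpha=\beta$ or $x=0$. The quasi-kernel $Q(V)$ is the set of $u\in V$ such that for all $\alpha,\beta\in F$ there is $\gamma\in F$ with $\alpha u+\beta u=\gamma u$. $(V,F)$ is a near vector space if $Q(V)$ generates $(V,+)$; "over a commutative $F$" means $\alpha(\beta v)=\beta(\alpha v)$ for all $\alpha,\beta\in F$, $v\in V$. For $u\in Q(V)\setminus\{0\}$, $\alpha+_u\beta$ is the unique $\gamma$ with $\alpha u+\beta u=\gamma u$. Elements $u,v\in Q(V)$ are compatible if $u+\lambda v\in Q(V)$ for some $\lambda\in F\setminus\{0\}$. By André's decomposition theorem $V$ is the direct sum of maximal regular (all nonzero quasi-kernel elements pairwise compatible) near vector subspaces $B_i$, $i\in I$, each nonzero element of $Q(V)$ lying in exactly one $B_i$; these are the blocks. For commutative $F$, all nonzero $u\in Q(V)\cap B_i$ give the same operation $+_{u_i}$ and $B_i$ is a vector space over the field $(F,+_{u_i},\circ)$. The block type is $BT(V)=\{+_{u_i}: i\in I\}$, a set of binary operations on $F$ (equality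 means equality of sets of operations). $V$ has finite block type if $BT(V)$ is finite, equivalently $V$ has finitely many blocks. $\bar F$ is the set of formal finite sums $\alpha_1+_\cdot\cdots+_\cdot\alpha_n$ of elements of $F$, acting on $V$ by $(\alpha_1+_\cdot\cdots+_\cdot\alpha_n)(v)=\alpha_1(v)+\cdots+\alpha_n(v)$; $\bar F\cap\mathrm{Aut}(V)$ is the set of those formal sums acting on $V$ as automorphisms of $(V,+)$. *)

theory Defs
  imports Main
begin

text \<open>The scalar structure F is modelled abstractly: a carrier Fc of type 'f with a
  composition mult and distinguished elements z (the zero map), e (identity) and m
  (negation).  An action act realises each element of Fc as an endomorphism of the
  additive group of the type 'v.  "Over the same F" means: the same abstract
  (Fc, mult, z, e, m) for both spaces.\<close>

definition F_group ::
  "'f set \<Rightarrow> ('f \<Rightarrow> 'f \<Rightarrow> 'f) \<Rightarrow> 'f \<Rightarrow> 'f \<Rightarrow> 'f \<Rightarrow> ('f \<Rightarrow> 'v::group_add \<Rightarrow> 'v) \<Rightarrow> bool"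
where
  "F_group Fc mult z e m act \<longleftrightarrow>
     z \<in> Fc \<and> e \<in> Fc \<and> m \<in> Fc \<and>
     act z = (\<lambda>_. 0) \<and> act e = id \<and> act m = uminus \<and>
     (\<forall>\<alpha>\<in>Fc. \<forall>x y. act \<alpha> (x + y) = act \<alpha> x + act \<alpha> y) \<and>
     (\<forall>\<alpha>\<in>Fc. \<forall>\<beta>\<in>Fc. mult \<alpha> \<beta> \<in> Fc \<and> act (mult \<alpha> \<beta>) = act \<alpha> \<circ> act \<beta>) \<and>
     (\<forall>\<alpha>\<in>Fc - {z}. \<forall>\<beta>\<in>Fc - {z}. mult \<alpha> \<beta> \<in> Fc - {z}) \<and>
     (\<forall>\<alpha>\<in>Fc - {z}. bij (act \<alpha>) \<and>
        (\<exists>\<beta>\<in>Fc - {z}. act \<beta> \<circ> act \<alpha> = id \<and> act \<alpha> \<circ> act \<beta> = id)) \<and>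
     (\<forall>\<alpha>\<in>Fc. \<forall>\<beta>\<in>Fc. \<forall>x. act \<alpha> x = act \<beta> x \<longrightarrow> \<alpha> = \<beta> \<or> x = 0)"

definition quasi_kernel :: "'f set \<Rightarrow> ('f \<Rightarrow> 'v::group_add \<Rightarrow> 'v) \<Rightarrow> 'v set" where
  "quasi_kernel Fc act =
     {u. \<forall>\<alpha>\<in>Fc. \<forall>\<beta>\<in>Fc. \<exists>\<gamma>\<in>Fc. act \<alpha> u + act \<beta> u = act \<gamma> u}"

inductive_set gen_subgroup :: "'v::group_add set \<Rightarrow> 'v set" for S where
  gen_zero: "0 \<in> gen_subgroup S"
| gen_base: "s \<in> S \<Longrightarrow> s \<in> gen_subgroup S"
| gen_add: "a \<in> gen_subgroup S \<Longrightarrow> b \<in> gen_subgroup S \<Longrightarrow> a + b \<in> gen_subgroup S"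
| gen_neg: "a \<in> gen_subgroup S \<Longrightarrow> - a \<in> gen_subgroup S"

definition near_vector_space ::
  "'f set \<Rightarrow> ('f \<Rightarrow> 'f \<Rightarrow> 'f) \<Rightarrow> 'f \<Rightarrow> 'f \<Rightarrow> 'f \<Rightarrow> ('f \<Rightarrow> 'v::group_add \<Rightarrow> 'v) \<Rightarrow> bool"
where
  "near_vector_space Fc mult z e m act \<longleftrightarrow>
     F_group Fc mult z e m act \<and> gen_subgroup (quasi_kernel Fc act) = UNIV"

definition commutative_F :: "'f set \<Rightarrow> ('f \<Rightarrow> 'v \<Rightarrow> 'v) \<Rightarrow> bool" where
  "commutative_F Fc act \<longleftrightarrow>
     (\<forall>\<alpha>\<in>Fc. \<forall>\<beta>\<in>Fc. \<forall>v. act \<alpha> (act \<beta> v) = act \<beta> (act \<alpha> v))"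

definition plus_u :: "'f set \<Rightarrow> ('f \<Rightarrow> 'v::group_add \<Rightarrow> 'v) \<Rightarrow> 'v \<Rightarrow> 'f \<Rightarrow> 'f \<Rightarrow> 'f" where
  "plus_u Fc act u = (\<lambda>\<alpha> \<beta>. if \<alpha> \<in> Fc \<and> \<beta> \<in> Fc
       then (THE \<gamma>. \<gamma> \<in> Fc \<and> act \<alpha> u + act \<beta> u = act \<gamma> u) else undefined)"

text \<open>Block type: the set of operations +_u for u a nonzero quasi-kernel element
  (each such u lies in exactly one block B_i and gives that block's operation +_{u_i}).\<close>
definition block_type :: "'f set \<Rightarrow> ('f \<Rightarrow> 'v::group_add \<Rightarrow> 'v) \<Rightarrow> ('f \<Rightarrow> 'f \<Rightarrow> 'f) set" where
  "block_type Fc act = {plus_u Fc act u | u. u \<in> quasi_kernel Fc act \<and> u \<noteq> 0}"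

definition finite_block_type :: "'f set \<Rightarrow> ('f \<Rightarrow> 'v::group_add \<Rightarrow> 'v) \<Rightarrow> bool" where
  "finite_block_type Fc act \<longleftrightarrow> finite (block_type Fc act)"

text \<open>Formal sums \<alpha>1 +. ... +. \<alpha>n (n \<ge> 1) as nonempty lists, and their action.\<close>
definition fsum_act :: "('f \<Rightarrow> 'v::group_add \<Rightarrow> 'v) \<Rightarrow> 'f list \<Rightarrow> 'v \<Rightarrow> 'v" where
  "fsum_act act as = (\<lambda>v. sum_list (map (\<lambda>\<alpha>. act \<alpha> v) as))"

definition Fbar_Aut :: "'f set \<Rightarrow> ('f \<Rightarrow> 'v::group_add \<Rightarrow> 'v) \<Rightarrow> 'f list set" where
  "Fbar_Aut Fc act =
     {as. as \<noteq> [] \<and> set as \<subseteq> Fc \<and> bij (fsum_act act as) \<and>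
          (\<forall>x y. fsum_act act as (x + y) = fsum_act act as x + fsum_act act as y)}"

end

theory Submission
  imports Defs
begin

text \<open>On the block with operation +_i, a formal sum L = a_1 +. ... +. a_n acts as the scalar
  L_i = a_1 +_i ... +_i a_n of the field (F, +_i, \<circ>), and formal sums multiply like their
  values.  Distinct field additions on the same multiplicative structure are independent: as in
  the Chinese remainder theorem, for finitely many of them there are formal sums with arbitrarily
  prescribed values.  Hence, for finite block type, L is an automorphism iff no value L_i is
  zero (an inverse is interpolated from the inverses of the L_i).  If +_p is a block operation of
  V_1 but not of V_2, a formal sum with value 0 for +_p and 1 for the block operations of V_2
  lies in Fbar \<inter> Aut(V_2) but not in Fbar \<inter> Aut(V_1).\<close>

definition fsum_val :: "'f \<Rightarrow> ('f \<Rightarrow> 'f \<Rightarrow> 'f) \<Rightarrow> 'f list \<Rightarrow> 'f" where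
  "fsum_val z p L = foldr p L z"

lemma fsum_val_Nil [simp]: "fsum_val z p [] = z"
  and fsum_val_Cons [simp]: "fsum_val z p (a # L) = p a (fsum_val z p L)"
  by (simp_all add: fsum_val_def)

definition formal_mult :: "('f \<Rightarrow> 'f \<Rightarrow> 'f) \<Rightarrow> 'f list \<Rightarrow> 'f list \<Rightarrow> 'f list" where
  "formal_mult mult M L = concat (map (\<lambda>a. map (mult a) L) M)"

lemma formal_mult_Nil [simp]: "formal_mult mult [] L = []"
  and formal_mult_Cons [simp]: "formal_mult mult (a # M) L = map (mult a) L @ formal_mult mult M L"
  by (simp_all add: formal_mult_def)

lemma formal_mult_closed:
  "(\<And>a b. a \<in> A \<Longrightarrow> b \<in> A \<Longrightarrow> mult a b \<in> A) \<Longrightarrow> set M \<subseteq> A \<Longrightarrow> set L \<subseteq> A \<Longrightarrow>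
    set (formal_mult mult M L) \<subseteq> A"
  by (induction M) auto

locale F_scalars =
  fixes Fc :: "'f set" and mult :: "'f \<Rightarrow> 'f \<Rightarrow> 'f" and z e m :: 'f
  assumes zero_in: "z \<in> Fc" and one_in: "e \<in> Fc" and neg_one_in: "m \<in> Fc"
    and one_neq_zero: "e \<noteq> z"
    and mult_closed: "a \<in> Fc \<Longrightarrow> b \<in> Fc \<Longrightarrow> mult a b \<in> Fc"
    and mult_commute: "a \<in> Fc \<Longrightarrow> b \<in> Fc \<Longrightarrow> mult a b = mult b a"
    and mult_zero_left: "a \<in> Fc \<Longrightarrow> mult z a = z"
    and mult_one_left: "a \<in> Fc \<Longrightarrow> mult e a = a"
    and inverse_exists: "a \<in> Fc \<Longrightarrow> a \<noteq> z \<Longrightarrow> \<exists>b\<in>Fc. mult b a = e"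
begin

lemma mult_zero_right: "a \<in> Fc \<Longrightarrow> mult a z = z"
  using mult_commute mult_zero_left zero_in by metis

lemma mult_one_right: "a \<in> Fc \<Longrightarrow> mult a e = a"
  using mult_commute mult_one_left one_in by metis

end

text \<open>The clause on arguments outside Fc mirrors plus_u; it makes two distinct field additions
  differ at a pair of scalars.\<close>
locale field_addition = F_scalars +
  fixes p :: "'f \<Rightarrow> 'f \<Rightarrow> 'f"
  assumes add_closed: "a \<in> Fc \<Longrightarrow> b \<in> Fc \<Longrightarrow> p a b \<in> Fc"
    and add_undefined: "a \<notin> Fc \<or> b \<notin> Fc \<Longrightarrow> p a b = undefined"
    and add_assoc: "a \<in> Fc \<Longrightarrow> b \<in> Fc \<Longrightarrow> c \<in> Fc \<Longrightarrow> p (p a b) c = p a (p b c)"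
    and add_commute: "a \<in> Fc \<Longrightarrow> b \<in> Fc \<Longrightarrow> p a b = p b a"
    and add_zero_left: "a \<in> Fc \<Longrightarrow> p z a = a"
    and add_neg: "a \<in> Fc \<Longrightarrow> p a (mult m a) = z"
    and distrib: "a \<in> Fc \<Longrightarrow> b \<in> Fc \<Longrightarrow> c \<in> Fc \<Longrightarrow> mult c (p a b) = p (mult c a) (mult c b)"
begin

lemma add_zero_right: "a \<in> Fc \<Longrightarrow> p a z = a"
  using add_commute add_zero_left zero_in by metis

lemma eq_if_add_neg_eq_zero:
  assumes a: "a \<in> Fc" and b: "b \<in> Fc" and ab: "p a (mult m b) = z"
  shows "a = b"
proof -
  have nb: "mult m b \<in> Fc" using b neg_one_in mult_closed by blast
  have "a = p a (p (mult m b) b)"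
    using add_neg[OF b] add_commute[OF b nb] add_zero_right[OF a] by simp
  also have "\<dots> = p z b" using add_assoc[OF a nb b] ab by simp
  finally show ?thesis using add_zero_left[OF b] by simp
qed

lemma fsum_val_closed: "set L \<subseteq> Fc \<Longrightarrow> fsum_val z p L \<in> Fc"
  by (induction L) (auto simp: zero_in add_closed)

lemma fsum_val_append:
  "set L \<subseteq> Fc \<Longrightarrow> set M \<subseteq> Fc \<Longrightarrow> fsum_val z p (L @ M) = p (fsum_val z p L) (fsum_val z p M)"
  by (induction L) (auto simp: add_zero_left add_assoc fsum_val_closed)

lemma fsum_val_scale:
  "c \<in> Fc \<Longrightarrow> set L \<subseteq> Fc \<Longrightarrow> fsum_val z p (map (mult c) L) = mult c (fsum_val z p L)"
  by (induction L) (auto simp: mult_zero_right distrib fsum_val_closed)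

lemma distrib_right:
  "a \<in> Fc \<Longrightarrow> b \<in> Fc \<Longrightarrow> c \<in> Fc \<Longrightarrow> mult (p a b) c = p (mult a c) (mult b c)"
  using distrib mult_commute add_closed by metis

lemma fsum_val_formal_mult:
  assumes "set M \<subseteq> Fc" and L: "set L \<subseteq> Fc"
  shows "fsum_val z p (formal_mult mult M L) = mult (fsum_val z p M) (fsum_val z p L)"
  using assms(1)
proof (induction M)
  case Nil
  show ?case using mult_zero_left[OF fsum_val_closed[OF L]] by simp
next
  case (Cons a M)
  have a: "a \<in> Fc" and M: "set M \<subseteq> Fc" using Cons.prems by auto
  have aL: "set (map (mult a) L) \<subseteq> Fc" using a L mult_closed by auto
  have "fsum_val z p (formal_mult mult (a # M) L)
      = p (fsum_val z p (map (mult a) L)) (fsum_val z p (formal_mult mult M L))"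
    using fsum_val_append[OF aL formal_mult_closed[of Fc mult, OF mult_closed M L]] by simp
  also have "\<dots> = p (mult a (fsum_val z p L)) (mult (fsum_val z p M) (fsum_val z p L))"
    using fsum_val_scale[OF a L] Cons.IH[OF M] by simp
  also have "\<dots> = mult (fsum_val z p (a # M)) (fsum_val z p L)"
    using distrib_right[OF a fsum_val_closed[OF M] fsum_val_closed[OF L]] by simp
  finally show ?case .
qed

end

context F_scalars
begin

lemma separating_formal_sum:
  assumes p: "field_addition Fc mult z e m p" and q: "field_addition Fc mult z e m q"
    and "p \<noteq> q"
  shows "\<exists>D. set D \<subseteq> Fc \<and> fsum_val z p D = z \<and> fsum_val z q D = e"
proof -
  interpret p: field_addition Fc mult z e m p by (fact p)
  interpret q: field_addition Fc mult z e m q by (fact q)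
  obtain a b where ab: "p a b \<noteq> q a b" using \<open>p \<noteq> q\<close> by blast
  then have a: "a \<in> Fc" and b: "b \<in> Fc" using p.add_undefined q.add_undefined by metis+
  define D where "D = [a, b, mult m (p a b)]"
    \<comment> \<open>its p-value is 0 and its q-value is (a +_q b) - (a +_p b) \<noteq> 0\<close>
  have D: "set D \<subseteq> Fc" using a b neg_one_in p.add_closed mult_closed by (auto simp: D_def)
  have "mult m (p a b) \<in> Fc" using neg_one_in p.add_closed[OF a b] mult_closed by blast
  then have pD: "fsum_val z p D = z"
    using p.add_assoc[OF a b] p.add_neg[OF p.add_closed[OF a b]] p.add_zero_right
    by (simp add: D_def)
  have "fsum_val z q D = q (q a b) (mult m (p a b))"
    using q.add_assoc q.add_zero_right a b neg_one_in mult_closed p.add_closed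
    by (simp add: D_def)
  then have qD: "fsum_val z q D \<noteq> z"
    using q.eq_if_add_neg_eq_zero[OF q.add_closed[OF a b] p.add_closed[OF a b]] ab by metis
  obtain c where c: "c \<in> Fc" "mult c (fsum_val z q D) = e"
    using inverse_exists[OF q.fsum_val_closed[OF D] qD] by blast
  have "set (map (mult c) D) \<subseteq> Fc" using D c mult_closed by auto
  moreover have "fsum_val z p (map (mult c) D) = z"
    using p.fsum_val_scale[OF c(1) D] pD mult_zero_right[OF c(1)] by simp
  moreover have "fsum_val z q (map (mult c) D) = e"
    using q.fsum_val_scale[OF c(1) D] c(2) by simp
  ultimately show ?thesis by blast
qed

lemma idempotent_formal_sum:
  assumes q: "field_addition Fc mult z e m q"
    and "finite T" "\<forall>t\<in>T. field_addition Fc mult z e m t" "q \<notin> T"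
  shows "\<exists>E. set E \<subseteq> Fc \<and> fsum_val z q E = e \<and> (\<forall>t\<in>T. fsum_val z t E = z)"
  using assms(2-4)
proof (induction T rule: finite_induct)
  case empty
  have "set [e] \<subseteq> Fc" "fsum_val z q [e] = e"
    using one_in field_addition.add_zero_right[OF q one_in] by auto
  then show ?case by blast
next
  case (insert t T)
  obtain E where E: "set E \<subseteq> Fc" "fsum_val z q E = e" "\<forall>t\<in>T. fsum_val z t E = z"
    using insert by auto
  have t: "field_addition Fc mult z e m t" and "t \<noteq> q" using insert.prems by auto
  then obtain D where D: "set D \<subseteq> Fc" "fsum_val z t D = z" "fsum_val z q D = e"
    using separating_formal_sum[OF t q] by blast
  have "fsum_val z q (formal_mult mult E D) = e"
    using field_addition.fsum_val_formal_mult[OF q E(1) D(1)] E(2) D(3) mult_one_left one_in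
    by simp
  moreover have "fsum_val z t' (formal_mult mult E D) = z" if "t' \<in> insert t T" for t'
  proof -
    have t': "field_addition Fc mult z e m t'" using that insert.prems by auto
    have "fsum_val z t' E = z \<or> fsum_val z t' D = z" using that E(3) D(2) by auto
    then show ?thesis
      using field_addition.fsum_val_formal_mult[OF t' E(1) D(1)]
        field_addition.fsum_val_closed[OF t'] E(1) D(1) mult_zero_left mult_zero_right
      by auto
  qed
  ultimately show ?case using formal_mult_closed[of Fc mult, OF mult_closed E(1) D(1)] by blast
qed

lemma interpolating_formal_sum:
  assumes "finite W" and W: "\<forall>w\<in>W. field_addition Fc mult z e m w"
    and "R \<subseteq> W" and "\<forall>r\<in>R. c r \<in> Fc"
  shows "\<exists>L. L \<noteq> [] \<and> set L \<subseteq> Fc \<and> (\<forall>w\<in>W. fsum_val z w L = (if w \<in> R then c w else z))"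
  using finite_subset[OF \<open>R \<subseteq> W\<close> \<open>finite W\<close>] assms(3,4)
proof (induction R rule: finite_induct)
  case empty
  have "fsum_val z w [z] = z" if "w \<in> W" for w
    using field_addition.add_zero_right[of Fc mult z e m w z] W that zero_in by simp
  then show ?case using zero_in by (intro exI[of _ "[z]"]) auto
next
  case (insert r R)
  obtain L where L: "L \<noteq> []" "set L \<subseteq> Fc"
      "\<forall>w\<in>W. fsum_val z w L = (if w \<in> R then c w else z)"
    using insert by auto
  have r: "r \<in> W" "field_addition Fc mult z e m r" "c r \<in> Fc" using insert.prems W by auto
  obtain E where E: "set E \<subseteq> Fc" "fsum_val z r E = e" "\<forall>w\<in>W - {r}. fsum_val z w E = z"
    using idempotent_formal_sum[OF r(2), of "W - {r}"] \<open>finite W\<close> W by auto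
  have rE: "set (map (mult (c r)) E) \<subseteq> Fc" using E(1) r(3) mult_closed by auto
  show ?case
  proof (intro exI conjI ballI)
    show "L @ map (mult (c r)) E \<noteq> []" "set (L @ map (mult (c r)) E) \<subseteq> Fc"
      using L(1,2) rE by auto
    fix w assume w: "w \<in> W"
    interpret w: field_addition Fc mult z e m w using W w by blast
    have "fsum_val z w (L @ map (mult (c r)) E) = w (fsum_val z w L) (mult (c r) (fsum_val z w E))"
      by (simp add: w.fsum_val_append[OF L(2) rE] w.fsum_val_scale[OF r(3) E(1)])
    moreover have "w \<noteq> r \<Longrightarrow> fsum_val z w E = z" using E(3) w by blast
    ultimately show "fsum_val z w (L @ map (mult (c r)) E) = (if w \<in> insert r R then c w else z)"
      using L(3) E(2) insert.hyps(2) insert.prems(2) w r(3) zero_in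
        mult_one_right mult_zero_right w.add_zero_left w.add_zero_right
      by (cases "w = r") auto
  qed
qed

end

lemma fsum_act_Nil [simp]: "fsum_act act [] v = 0"
  and fsum_act_Cons [simp]: "fsum_act act (a # L) v = act a v + fsum_act act L v"
  by (simp_all add: fsum_act_def)

lemma fsum_act_append [simp]: "fsum_act act (L @ M) v = fsum_act act L v + fsum_act act M v"
  by (induction L) (simp_all add: add.assoc)

locale comm_F_group =
  fixes Fc :: "'f set" and mult :: "'f \<Rightarrow> 'f \<Rightarrow> 'f" and z e m :: 'f
    and act :: "'f \<Rightarrow> 'v::group_add \<Rightarrow> 'v"
  assumes F_group: "F_group Fc mult z e m act" and commutative: "commutative_F Fc act"
begin

lemma zero_in: "z \<in> Fc" and one_in: "e \<in> Fc" and neg_one_in: "m \<in> Fc"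
  and act_zero_scalar: "act z = (\<lambda>_. 0)" and act_one: "act e = id" and act_neg_one: "act m = uminus"
  using F_group unfolding F_group_def by auto

lemma act_add: "\<alpha> \<in> Fc \<Longrightarrow> act \<alpha> (x + y) = act \<alpha> x + act \<alpha> y"
  and mult_closed: "\<alpha> \<in> Fc \<Longrightarrow> \<beta> \<in> Fc \<Longrightarrow> mult \<alpha> \<beta> \<in> Fc"
  and act_mult: "\<alpha> \<in> Fc \<Longrightarrow> \<beta> \<in> Fc \<Longrightarrow> act (mult \<alpha> \<beta>) x = act \<alpha> (act \<beta> x)"
  using F_group unfolding F_group_def by auto

lemma act_invertible: "\<alpha> \<in> Fc \<Longrightarrow> \<alpha> \<noteq> z \<Longrightarrow> \<exists>\<beta>\<in>Fc. act \<beta> \<circ> act \<alpha> = id"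
  using F_group unfolding F_group_def by blast

lemma act_eq_iff:
  assumes "\<alpha> \<in> Fc" "\<beta> \<in> Fc" "x \<noteq> 0"
  shows "act \<alpha> x = act \<beta> x \<longleftrightarrow> \<alpha> = \<beta>"
proof -
  have "\<forall>\<alpha>\<in>Fc. \<forall>\<beta>\<in>Fc. \<forall>x. act \<alpha> x = act \<beta> x \<longrightarrow> \<alpha> = \<beta> \<or> x = 0"
    using F_group unfolding F_group_def by (elim conjE)
  then show ?thesis using assms by blast
qed

lemma act_commute: "\<alpha> \<in> Fc \<Longrightarrow> \<beta> \<in> Fc \<Longrightarrow> act \<alpha> (act \<beta> v) = act \<beta> (act \<alpha> v)"
  using commutative unfolding commutative_F_def by blast

lemma act_zero: "\<alpha> \<in> Fc \<Longrightarrow> act \<alpha> 0 = 0"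
proof -
  assume "\<alpha> \<in> Fc"
  then have "act \<alpha> 0 + act \<alpha> 0 = act \<alpha> 0 + 0" using act_add[of \<alpha> 0 0] by simp
  then show ?thesis by (rule add_left_imp_eq)
qed

text \<open>The additive group is abelian because negation, the action of m, is an endomorphism.\<close>
lemma vec_add_commute: "(x::'v) + y = y + x"
proof -
  have "- (- y + - x) = y + x" using act_add[OF neg_one_in, of "- y" "- x"] by (simp add: act_neg_one)
  moreover have "- (- y + - x) = x + y" by (simp only: minus_add minus_minus)
  ultimately show ?thesis by simp
qed

lemma F_scalars_if_nontrivial:
  assumes v: "(v::'v) \<noteq> 0"
  shows "F_scalars Fc mult z e m"
proof
  show "e \<noteq> z"
  proof
    assume "e = z"
    then have "act e v = act z v" by simp
    then show False using v by (simp add: act_one act_zero_scalar)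
  qed
  fix a b assume a: "a \<in> Fc"
  have "act (mult z a) v = act z v" by (simp add: act_mult[OF zero_in a] act_zero_scalar)
  then show "mult z a = z" using act_eq_iff[OF mult_closed[OF zero_in a] zero_in v] by blast
  have "act (mult e a) v = act a v" by (simp add: act_mult[OF one_in a] act_one)
  then show "mult e a = a" using act_eq_iff[OF mult_closed[OF one_in a] a v] by blast
  show "\<exists>b\<in>Fc. mult b a = e" if nz: "a \<noteq> z"
  proof -
    obtain b where b: "b \<in> Fc" "act b \<circ> act a = id" using act_invertible[OF a nz] by blast
    then have "act (mult b a) v = act e v" using act_mult[OF b(1) a] act_one by (metis comp_apply)
    then show ?thesis using act_eq_iff[OF mult_closed[OF b(1) a] one_in v] b(1) by blast
  qed
  assume b: "b \<in> Fc"
  show "mult a b \<in> Fc" using mult_closed[OF a b] .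
  have "act (mult a b) v = act (mult b a) v"
    by (simp only: act_mult[OF a b] act_mult[OF b a] act_commute[OF a b])
  then show "mult a b = mult b a" using act_eq_iff[OF mult_closed[OF a b] mult_closed[OF b a] v] by blast
qed (fact zero_in one_in neg_one_in)+

lemma vec_add_left_commute: "(x::'v) + (y + w) = y + (x + w)"
  by (simp only: add.assoc[symmetric] vec_add_commute[of x y])

lemma fsum_act_add:
  "set L \<subseteq> Fc \<Longrightarrow> fsum_act act L (x + y) = fsum_act act L x + fsum_act act L y"
  by (induction L) (simp_all add: act_add add.assoc vec_add_left_commute)

lemma fsum_act_zero: "set L \<subseteq> Fc \<Longrightarrow> fsum_act act L 0 = 0"
  by (induction L) (simp_all add: act_zero)

lemma fsum_act_scale:
  "c \<in> Fc \<Longrightarrow> set L \<subseteq> Fc \<Longrightarrow> fsum_act act (map (mult c) L) v = act c (fsum_act act L v)"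
  by (induction L) (simp_all add: act_zero act_add act_mult)

lemma fsum_act_formal_mult:
  "set M \<subseteq> Fc \<Longrightarrow> set L \<subseteq> Fc \<Longrightarrow>
    fsum_act act (formal_mult mult M L) v = fsum_act act M (fsum_act act L v)"
  by (induction M) (simp_all add: fsum_act_scale)

context
  fixes u assumes u: "u \<in> quasi_kernel Fc act" "u \<noteq> 0"
begin

lemma plus_u_closed: "a \<in> Fc \<Longrightarrow> b \<in> Fc \<Longrightarrow> plus_u Fc act u a b \<in> Fc"
  and act_plus_u: "a \<in> Fc \<Longrightarrow> b \<in> Fc \<Longrightarrow> act (plus_u Fc act u a b) u = act a u + act b u"
proof -
  assume a: "a \<in> Fc" and b: "b \<in> Fc"
  obtain g where g: "g \<in> Fc" "act a u + act b u = act g u"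
    using u(1) a b unfolding quasi_kernel_def by blast
  have "(THE \<gamma>. \<gamma> \<in> Fc \<and> act a u + act b u = act \<gamma> u) = g"
    using g act_eq_iff[OF _ g(1) u(2)] by (intro the_equality) auto
  then have "plus_u Fc act u a b = g" using a b by (simp add: plus_u_def)
  then show "plus_u Fc act u a b \<in> Fc" "act (plus_u Fc act u a b) u = act a u + act b u"
    using g by simp_all
qed

lemma field_addition_plus_u: "field_addition Fc mult z e m (plus_u Fc act u)"
proof -
  interpret F_scalars Fc mult z e m by (rule F_scalars_if_nontrivial[OF u(2)])
  let ?p = "plus_u Fc act u"
  have eq: "x = y" if "x \<in> Fc" "y \<in> Fc" "act x u = act y u" for x y
    using act_eq_iff[OF that(1,2) u(2)] that(3) by blast
  note closed = plus_u_closed mult_closed neg_one_in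
  show ?thesis
  proof
    fix a b c assume a: "a \<in> Fc" and b: "b \<in> Fc" and c: "c \<in> Fc"
    show "?p a b \<in> Fc" using plus_u_closed[OF a b] .
    show "?p (?p a b) c = ?p a (?p b c)"
      using a b c closed by (intro eq) (simp_all add: act_plus_u add.assoc)
    show "?p a b = ?p b a"
      using a b closed by (intro eq) (simp_all add: act_plus_u vec_add_commute)
    show "?p z a = a"
      using a closed zero_in by (intro eq) (simp_all add: act_plus_u act_zero_scalar)
    show "?p a (mult m a) = z"
      using a closed zero_in by (intro eq) (simp_all add: act_plus_u act_mult act_neg_one act_zero_scalar)
    show "mult c (?p a b) = ?p (mult c a) (mult c b)"
      using a b c closed by (intro eq) (simp_all add: act_plus_u act_mult act_add)
  next
    fix a b :: 'f assume "a \<notin> Fc \<or> b \<notin> Fc"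
    then show "?p a b = undefined" by (auto simp: plus_u_def)
  qed
qed

lemma act_fsum_val_plus_u:
  "set L \<subseteq> Fc \<Longrightarrow> act (fsum_val z (plus_u Fc act u) L) u = fsum_act act L u"
proof (induction L)
  case Nil
  show ?case by (simp add: act_zero_scalar)
next
  case (Cons a L)
  then show ?case
    using field_addition.fsum_val_closed[OF field_addition_plus_u] by (simp add: act_plus_u)
qed

end

lemma field_addition_if_block_type:
  "p \<in> block_type Fc act \<Longrightarrow> field_addition Fc mult z e m p"
  unfolding block_type_def using field_addition_plus_u by blast

lemma fsum_val_neq_zero_if_Fbar_Aut:
  assumes L: "L \<in> Fbar_Aut Fc act" and p: "p \<in> block_type Fc act"
  shows "fsum_val z p L \<noteq> z"
proof
  assume val: "fsum_val z p L = z"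
  obtain u where u: "u \<in> quasi_kernel Fc act" "u \<noteq> 0" "p = plus_u Fc act u"
    using p unfolding block_type_def by blast
  have L': "set L \<subseteq> Fc" "inj (fsum_act act L)" using L unfolding Fbar_Aut_def bij_def by auto
  have "fsum_act act L u = fsum_act act L 0"
    using act_fsum_val_plus_u[OF u(1,2) L'(1)] val u(3) by (simp add: act_zero_scalar fsum_act_zero[OF L'(1)])
  then show False using L'(2) u(2) by (simp add: inj_eq)
qed

end

lemma additive_fixes_gen_subgroup:
  assumes add: "\<And>x y. h (x + y) = h x + h y" and fixed: "\<And>s. s \<in> S \<Longrightarrow> h s = s"
    and "v \<in> gen_subgroup S"
  shows "h v = (v :: 'v::group_add)"
  using assms(3)
proof (induction rule: gen_subgroup.induct)
  have "h 0 + h 0 = h 0 + 0" using add[of 0 0] by simp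
  then have h0: "h 0 = 0" by (rule add_left_imp_eq)
  {
    case gen_zero
    show ?case by (fact h0)
  next
    case (gen_base s)
    then show ?case by (rule fixed)
  next
    case (gen_add a b)
    then show ?case by (simp add: add)
  next
    case (gen_neg a)
    have "h a + h (- a) = 0" using add[of a "- a", symmetric] h0 by simp
    then show ?case using gen_neg.IH minus_unique by metis
  }
qed

locale comm_near_vector_space = comm_F_group Fc mult z e m act
  for Fc :: "'f set" and mult z e m and act :: "'f \<Rightarrow> 'v::group_add \<Rightarrow> 'v" +
  assumes generated: "gen_subgroup (quasi_kernel Fc act) = UNIV"
begin

lemma fsum_act_inverse:
  assumes A: "set A \<subseteq> Fc" and B: "set B \<subseteq> Fc"
    and inverse: "\<forall>p\<in>block_type Fc act. mult (fsum_val z p A) (fsum_val z p B) = e"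
  shows "fsum_act act A (fsum_act act B v) = v"
proof -
  let ?AB = "formal_mult mult A B"
  have AB: "set ?AB \<subseteq> Fc" using formal_mult_closed[of Fc mult, OF mult_closed A B] .
  have "fsum_act act ?AB u = u" if u: "u \<in> quasi_kernel Fc act" for u
  proof (cases "u = 0")
    case True
    then show ?thesis using fsum_act_zero[OF AB] by simp
  next
    case False
    define p where "p = plus_u Fc act u"
    have p: "p \<in> block_type Fc act" using u False unfolding block_type_def p_def by blast
    have "fsum_act act ?AB u = act (fsum_val z p ?AB) u"
      using act_fsum_val_plus_u[OF u False AB] by (simp add: p_def)
    also have "\<dots> = act e u"
      using field_addition.fsum_val_formal_mult[OF field_addition_if_block_type[OF p] A B] inverse p
      by simp
    finally show ?thesis by (simp add: act_one)
  qed
  then have "fsum_act act ?AB v = v"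
    using additive_fixes_gen_subgroup[of "fsum_act act ?AB"] fsum_act_add[OF AB] generated by blast
  then show ?thesis by (simp add: fsum_act_formal_mult[OF A B])
qed

lemma Fbar_Aut_iff:
  assumes "finite (block_type Fc act)"
  shows "L \<in> Fbar_Aut Fc act \<longleftrightarrow>
    L \<noteq> [] \<and> set L \<subseteq> Fc \<and> (\<forall>p\<in>block_type Fc act. fsum_val z p L \<noteq> z)"
proof (intro iffI)
  assume "L \<in> Fbar_Aut Fc act"
  then show "L \<noteq> [] \<and> set L \<subseteq> Fc \<and> (\<forall>p\<in>block_type Fc act. fsum_val z p L \<noteq> z)"
    using fsum_val_neq_zero_if_Fbar_Aut unfolding Fbar_Aut_def by blast
next
  assume L: "L \<noteq> [] \<and> set L \<subseteq> Fc \<and> (\<forall>p\<in>block_type Fc act. fsum_val z p L \<noteq> z)"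
  have "bij (fsum_act act L)"
  proof (cases "\<exists>v::'v. v \<noteq> 0")
    case False
    then have trivial: "x = 0" for x :: 'v by blast
    have "inj (fsum_act act L)" by (rule injI) (subst (1 2) trivial, rule refl)
    moreover have "surj (fsum_act act L)" by (rule surjI[of _ id]) (subst (1 2) trivial, rule refl)
    ultimately show ?thesis by (rule bijI)
  next
    case True
    then interpret F_scalars Fc mult z e m using F_scalars_if_nontrivial by blast
    have fields: "\<forall>p\<in>block_type Fc act. field_addition Fc mult z e m p"
      using field_addition_if_block_type by blast
    have vals: "fsum_val z p L \<in> Fc" if "p \<in> block_type Fc act" for p
      using field_addition.fsum_val_closed[OF field_addition_if_block_type[OF that]] L by blast
    have "\<exists>c. c \<in> Fc \<and> mult c (fsum_val z p L) = e" if "p \<in> block_type Fc act" for p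
      using inverse_exists[OF vals[OF that]] L that by blast
    then obtain c where c: "\<And>p. p \<in> block_type Fc act \<Longrightarrow> c p \<in> Fc \<and> mult (c p) (fsum_val z p L) = e"
      by metis
    obtain M where M: "set M \<subseteq> Fc" "\<forall>p\<in>block_type Fc act. fsum_val z p M = c p"
      using interpolating_formal_sum[OF assms fields order_refl, of c] c by auto
    have left_inverse: "mult (fsum_val z p M) (fsum_val z p L) = e" if "p \<in> block_type Fc act" for p
      using M(2) c that by simp
    have right_inverse: "mult (fsum_val z p L) (fsum_val z p M) = e" if "p \<in> block_type Fc act" for p
      using left_inverse[OF that] mult_commute[OF vals[OF that]] M(2) c that by simp
    have "fsum_act act M \<circ> fsum_act act L = id"
      using fsum_act_inverse[OF M(1), of L] left_inverse L by auto
    moreover have "fsum_act act L \<circ> fsum_act act M = id"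
      using fsum_act_inverse[of L M] right_inverse M(1) L by auto
    ultimately show ?thesis by (rule o_bij)
  qed
  then show "L \<in> Fbar_Aut Fc act"
    using L fsum_act_add unfolding Fbar_Aut_def by blast
qed

end

lemma block_type_subset_if_Fbar_Aut_subset:
  fixes act1 :: "'f \<Rightarrow> 'a::group_add \<Rightarrow> 'a" and act2 :: "'f \<Rightarrow> 'b::group_add \<Rightarrow> 'b"
  assumes V1: "comm_F_group Fc mult z e m act1"
    and V2: "comm_near_vector_space Fc mult z e m act2"
    and finite: "finite (block_type Fc act2)"
    and Fbar: "Fbar_Aut Fc act2 \<subseteq> Fbar_Aut Fc act1"
  shows "block_type Fc act1 \<subseteq> block_type Fc act2"
proof
  interpret V1: comm_F_group Fc mult z e m act1 by (fact V1)
  interpret V2: comm_near_vector_space Fc mult z e m act2 by (fact V2)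
  fix p assume p: "p \<in> block_type Fc act1"
  show "p \<in> block_type Fc act2"
  proof (rule ccontr)
    assume p2: "p \<notin> block_type Fc act2"
    obtain u :: 'a where "u \<noteq> 0" using p unfolding block_type_def by blast
    then interpret F_scalars Fc mult z e m by (rule V1.F_scalars_if_nontrivial)
    let ?W = "insert p (block_type Fc act2)"
    have "\<forall>w\<in>?W. field_addition Fc mult z e m w"
      using V1.field_addition_if_block_type[OF p] V2.field_addition_if_block_type by blast
    then obtain L where L: "L \<noteq> []" "set L \<subseteq> Fc"
        "\<forall>w\<in>?W. fsum_val z w L = (if w \<in> block_type Fc act2 then e else z)"
      using interpolating_formal_sum[of ?W "block_type Fc act2" "\<lambda>_. e"] finite one_in by blast
    have "\<forall>q\<in>block_type Fc act2. fsum_val z q L \<noteq> z" using L(3) one_neq_zero by auto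
    then have "L \<in> Fbar_Aut Fc act2" using L(1,2) V2.Fbar_Aut_iff[OF finite] by blast
    moreover have "L \<notin> Fbar_Aut Fc act1"
      using V1.fsum_val_neq_zero_if_Fbar_Aut[OF _ p] L(3) p2 by auto
    ultimately show False using Fbar by blast
  qed
qed

theorem mainTheorem10:
  fixes Fc :: "'f set" and mult :: "'f \<Rightarrow> 'f \<Rightarrow> 'f" and z e m :: 'f
    and act1 :: "'f \<Rightarrow> 'a::group_add \<Rightarrow> 'a"
    and act2 :: "'f \<Rightarrow> 'b::group_add \<Rightarrow> 'b"
  assumes "near_vector_space Fc mult z e m act1"
    and "near_vector_space Fc mult z e m act2"
    and "commutative_F Fc act1"
    and "commutative_F Fc act2"
    and "finite_block_type Fc act1"
    and "finite_block_type Fc act2"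
  shows "block_type Fc act1 = block_type Fc act2 \<longleftrightarrow> Fbar_Aut Fc act1 = Fbar_Aut Fc act2"
proof -
  have V1: "comm_near_vector_space Fc mult z e m act1" and V2: "comm_near_vector_space Fc mult z e m act2"
    using assms(1-4) by (simp_all add: comm_near_vector_space_def comm_near_vector_space_axioms_def
        comm_F_group_def near_vector_space_def)
  have finite1: "finite (block_type Fc act1)" and finite2: "finite (block_type Fc act2)"
    using assms(5,6) unfolding finite_block_type_def by auto
  note Fbar1 = comm_near_vector_space.Fbar_Aut_iff[OF V1 finite1]
    and Fbar2 = comm_near_vector_space.Fbar_Aut_iff[OF V2 finite2]
  note subset = block_type_subset_if_Fbar_Aut_subset[OF comm_near_vector_space.axioms(1)]
  show ?thesis
  proof
    assume "block_type Fc act1 = block_type Fc act2"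
    then show "Fbar_Aut Fc act1 = Fbar_Aut Fc act2" by (auto simp: Fbar1 Fbar2)
  next
    assume "Fbar_Aut Fc act1 = Fbar_Aut Fc act2"
    then show "block_type Fc act1 = block_type Fc act2"
      using subset[OF V1 V2 finite2] subset[OF V2 V1 finite1] by blast
  qed
qed

end
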